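(* Let $m>1$, $\chi>0$, and let $p\ge2$ be an integer. The maximum $$\frac1{C_p}:=\max_{X\in\mathcal R^p}\frac{\sum_{1\le i\ne j\le p}|X_j-X_i|^{1-m}}{\sum_{i=1}^{p-1}(X_{i+1}-X_i)^{1-m}}$$ is attained and satisfies $\frac1{C_p}\le p$. Moreover, if $\alpha\ge0$, then $\mathcal F^p_{m,\alpha}$ is bounded below on $\mathcal R^p$ if and only if $\chi\le C_p$.
   Context: $\mathcal R^p=\{X\in\mathbb R^p: X_1<\dots<X_p,\ \sum_iX_i=0\}$. For $\alpha\in\mathbb R$, $\mathcal F^p_{m,\alpha}(X)=\frac1{m-1}\sum_{i=1}^{p-1}(X_{i+1}-X_i)^{1-m}-\frac{\chi}{m-1}\sum_{1\le i\ne j\le p}|X_i-X_j|^{1-m}+\alpha\frac{|X|^2}{2}$, with $|\cdot|$ the Euclidean norm. *)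

theory Defs
  imports Complex_Main
begin

text \<open>Points X of R^p are represented as functions nat => real, coordinates X 1, ..., X p
  (values at other indices are irrelevant).\<close>

definition Rp :: "nat \<Rightarrow> (nat \<Rightarrow> real) set" where
  "Rp p = {X. (\<forall>i\<in>{1..<p}. X i < X (i+1)) \<and> (\<Sum>i=1..p. X i) = 0}"

definition adj_sum :: "real \<Rightarrow> nat \<Rightarrow> (nat \<Rightarrow> real) \<Rightarrow> real" where
  "adj_sum m p X = (\<Sum>i=1..<p. (X (i+1) - X i) powr (1 - m))"

definition pair_sum :: "real \<Rightarrow> nat \<Rightarrow> (nat \<Rightarrow> real) \<Rightarrow> real" where
  "pair_sum m p X = (\<Sum>i\<in>{1..p}. \<Sum>j\<in>{1..p} - {i}. \<bar>X j - X i\<bar> powr (1 - m))"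

definition ratio :: "real \<Rightarrow> nat \<Rightarrow> (nat \<Rightarrow> real) \<Rightarrow> real" where
  "ratio m p X = pair_sum m p X / adj_sum m p X"

definition Cp :: "real \<Rightarrow> nat \<Rightarrow> real" where
  "Cp m p = 1 / (SUP X\<in>Rp p. ratio m p X)"

definition Fp :: "real \<Rightarrow> real \<Rightarrow> real \<Rightarrow> nat \<Rightarrow> (nat \<Rightarrow> real) \<Rightarrow> real" where
  "Fp m \<chi> \<alpha> p X = adj_sum m p X / (m - 1) - \<chi> / (m - 1) * pair_sum m p X
      + \<alpha> * (\<Sum>i=1..p. (X i)^2) / 2"

end

theory Submission
  imports Defs "HOL-Analysis.Function_Topology" "HOL-Real_Asymp.Real_Asymp"
begin

text \<open>
  Put s = 1/(m-1) and encode a configuration X by its gap weights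
  h k = (X (k+1) - X k) powr (1-m). Then |X j - X i| powr (1-m) = (\<Sum>i\<le>t<j. h t powr -s) powr (-1/s),
  which is at most every h t with i \<le> t < j and extends continuously by 0 to weights with zeros
  (infinitely long gaps); this is link_weight. The ratio becomes 2 G(h) / (\<Sum>k. h k) with
  G = link_total, homogeneous of degree 0, so it suffices to maximise G on the compact simplex
  \<Sum>k. h k = 1. A maximiser has no zero weight:
  if it had, the points would split into clusters, and then 2 G(h) \<le> N, where N counts the pairs
  joined when a suitable zero gap is given a positive weight \<epsilon>; doing so gains almost N \<epsilon>, more
  than the factor 1 + \<epsilon> lost by renormalising. Charging every pair to its first and last gap gives
  2 G(h) \<le> p (\<Sum>k. h k), the bound p. Finally, dilating X by t multiplies the interaction part of F
  by t powr (1-m) and the confinement by t^2, so F is bounded below exactly when \<chi> times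
  the maximal ratio is at most 1.
\<close>

section \<open>Link weights and the weight simplex\<close>

definition positive_on :: "(nat \<Rightarrow> real) \<Rightarrow> nat \<Rightarrow> nat \<Rightarrow> bool" where
  "positive_on h i j \<longleftrightarrow> (\<forall>t\<in>{i..<j}. 0 < h t)"

lemma positive_on_trans:
  assumes "positive_on h i j" and "positive_on h j k"
  shows "positive_on h i k"
  unfolding positive_on_def
proof
  fix t assume "t \<in> {i..<k}"
  then show "0 < h t"
    using assms unfolding positive_on_def by (cases "t < j") auto
qed

lemma positive_on_Suc [simp]: "positive_on h k (Suc k) \<longleftrightarrow> 0 < h k"
  by (simp add: positive_on_def)

lemma positive_on_subset:
  "positive_on h i j \<Longrightarrow> i \<le> i' \<Longrightarrow> j' \<le> j \<Longrightarrow> positive_on h i' j'"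
  by (simp add: positive_on_def)

definition link_weight :: "real \<Rightarrow> (nat \<Rightarrow> real) \<Rightarrow> nat \<Rightarrow> nat \<Rightarrow> real" where
  "link_weight s h i j =
     (if positive_on h i j then (\<Sum>t=i..<j. h t powr (-s)) powr (-1/s) else 0)"

definition link_total :: "real \<Rightarrow> nat \<Rightarrow> (nat \<Rightarrow> real) \<Rightarrow> real" where
  "link_total s p h = (\<Sum>i=1..p. \<Sum>j=i+1..p. link_weight s h i j)"

definition gap_total :: "nat \<Rightarrow> (nat \<Rightarrow> real) \<Rightarrow> real" where
  "gap_total p h = (\<Sum>k=1..<p. h k)"

lemma link_weight_nonneg: "0 \<le> link_weight s h i j"
  by (simp add: link_weight_def)

lemma link_weight_le:
  assumes s: "s > 0" and t: "t \<in> {i..<j}" and nonneg: "0 \<le> h t"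
  shows "link_weight s h i j \<le> h t"
proof (cases "positive_on h i j")
  case True
  have ht: "0 < h t" using True t by (simp add: positive_on_def)
  have "h t powr (-s) \<le> (\<Sum>t=i..<j. h t powr (-s))"
    by (rule member_le_sum) (use t in auto)
  then have "(\<Sum>t=i..<j. h t powr (-s)) powr (-1/s) \<le> (h t powr (-s)) powr (-1/s)"
    by (intro powr_mono2') (use s ht in auto)
  also have "\<dots> = h t" using ht s by (simp add: powr_powr)
  finally show ?thesis using True by (simp add: link_weight_def)
qed (use nonneg in \<open>simp add: link_weight_def\<close>)

lemma link_weight_cong:
  assumes "\<And>t. t \<in> {i..<j} \<Longrightarrow> h t = h' t"
  shows "link_weight s h i j = link_weight s h' i j"
proof -
  have "positive_on h i j = positive_on h' i j"
    using assms by (simp add: positive_on_def)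
  moreover have "(\<Sum>t=i..<j. h t powr (-s)) = (\<Sum>t=i..<j. h' t powr (-s))"
    using assms by simp
  ultimately show ?thesis by (simp add: link_weight_def)
qed

lemma link_weight_scale:
  assumes c: "c > 0" and s: "s > 0"
  shows "link_weight s (\<lambda>k. c * h k) i j = c * link_weight s h i j"
proof (cases "positive_on h i j")
  case True
  have "(\<Sum>t=i..<j. (c * h t) powr (-s)) = c powr (-s) * (\<Sum>t=i..<j. h t powr (-s))"
    unfolding sum_distrib_left
    by (rule sum.cong) (use True c in \<open>auto simp: positive_on_def powr_mult\<close>)
  moreover have "(c powr (-s) * (\<Sum>t=i..<j. h t powr (-s))) powr (-1/s)
      = c * (\<Sum>t=i..<j. h t powr (-s)) powr (-1/s)"
    using c s by (simp add: powr_mult powr_powr sum_nonneg)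
  ultimately show ?thesis
    using True c by (simp add: link_weight_def positive_on_def)
next
  case False
  moreover have "\<not> positive_on (\<lambda>k. c * h k) i j"
    using False c by (simp add: positive_on_def zero_less_mult_iff)
  ultimately show ?thesis by (simp add: link_weight_def)
qed

lemma link_total_scale:
  "c > 0 \<Longrightarrow> s > 0 \<Longrightarrow> link_total s p (\<lambda>k. c * h k) = c * link_total s p h"
  by (simp add: link_total_def link_weight_scale sum_distrib_left)

lemma link_total_nonneg: "0 \<le> link_total s p h"
  by (simp add: link_total_def sum_nonneg link_weight_nonneg)

lemma link_weight_continuous_on:
  assumes s: "s > 0" and ij: "i < j"
  shows "continuous_on {h. \<forall>k. 0 \<le> h k} (\<lambda>h. link_weight s h i j)"
  unfolding continuous_on_def
proof
  fix x :: "nat \<Rightarrow> real" assume x: "x \<in> {h. \<forall>k. 0 \<le> h k}"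
  let ?F = "at x within {h::nat \<Rightarrow> real. \<forall>k. 0 \<le> h k}"
  have coordinate: "((\<lambda>h. h t) \<longlongrightarrow> x t) ?F" for t
    using continuous_on_product_coordinates[of t] unfolding continuous_on_def
    by (blast intro: tendsto_within_subset[OF _ subset_UNIV])
  show "((\<lambda>h. link_weight s h i j) \<longlongrightarrow> link_weight s x i j) ?F"
  proof (cases "positive_on x i j")
    case True
    then have x_pos: "0 < x t" if "i \<le> t" "t < j" for t
      using that by (simp add: positive_on_def)
    have "\<forall>\<^sub>F h in ?F. positive_on h i j"
      unfolding positive_on_def
      by (intro eventually_ball_finite ballI order_tendstoD(1)[OF coordinate] x_pos) auto
    then have "\<forall>\<^sub>F h in ?F. (\<Sum>t=i..<j. h t powr (-s)) powr (-1/s) = link_weight s h i j"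
      by eventually_elim (simp add: link_weight_def)
    moreover have "0 < (\<Sum>t=i..<j. x t powr (-s))"
      using ij by (intro sum_pos) (auto dest: x_pos)
    then have "((\<lambda>h. (\<Sum>t=i..<j. h t powr (-s)) powr (-1/s))
        \<longlongrightarrow> (\<Sum>t=i..<j. x t powr (-s)) powr (-1/s)) ?F"
      by (intro tendsto_powr tendsto_sum coordinate tendsto_const) (auto dest: x_pos)
    ultimately show ?thesis
      using True by (simp add: link_weight_def Lim_transform_eventually)
  next
    case False
    then obtain t where "t \<in> {i..<j}" "\<not> 0 < x t"
      by (auto simp: positive_on_def)
    with x have t: "t \<in> {i..<j}" "x t = 0"
      by (auto simp: order_less_le)
    have "((\<lambda>h. link_weight s h i j) \<longlongrightarrow> 0) ?F"
    proof (rule tendsto_sandwich[of "\<lambda>h. 0" _ _ "\<lambda>h. h t"])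
      show "\<forall>\<^sub>F h in ?F. link_weight s h i j \<le> h t"
        unfolding eventually_at_filter
        by (rule always_eventually) (use s t in \<open>auto intro: link_weight_le\<close>)
      show "((\<lambda>h. h t) \<longlongrightarrow> 0) ?F"
        using coordinate[of t] t by simp
    qed (simp_all add: link_weight_nonneg)
    then show ?thesis using False by (simp add: link_weight_def)
  qed
qed

lemma link_total_continuous_on:
  "s > 0 \<Longrightarrow> continuous_on {h. \<forall>k. 0 \<le> h k} (link_total s p)"
  unfolding link_total_def by (intro continuous_on_sum link_weight_continuous_on) auto

definition gap_simplex :: "nat \<Rightarrow> (nat \<Rightarrow> real) set" where
  "gap_simplex p =
     {h. \<forall>k. h k \<in> (if k \<in> {1..<p} then {0..1} else {0})} \<inter> {h. gap_total p h = 1}"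

lemma gap_simplex_iff:
  "h \<in> gap_simplex p \<longleftrightarrow>
     (\<forall>k\<in>{1..<p}. 0 \<le> h k) \<and> (\<forall>k. k \<notin> {1..<p} \<longrightarrow> h k = 0) \<and> gap_total p h = 1"
proof
  assume "h \<in> gap_simplex p"
  then show "(\<forall>k\<in>{1..<p}. 0 \<le> h k) \<and> (\<forall>k. k \<notin> {1..<p} \<longrightarrow> h k = 0) \<and> gap_total p h = 1"
  proof (intro conjI allI impI ballI)
    fix k
    have "h k \<in> (if k \<in> {1..<p} then {0..1} else {0})"
      using \<open>h \<in> gap_simplex p\<close> by (simp add: gap_simplex_def)
    then show "0 \<le> h k" if "k \<in> {1..<p}"
      using that by simp
    show "h k = 0" if "k \<notin> {1..<p}"
      using \<open>h k \<in> _\<close> by (simp only: if_not_P[OF that] singleton_iff)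
  qed (use \<open>h \<in> gap_simplex p\<close> in \<open>simp add: gap_simplex_def\<close>)
next
  assume h: "(\<forall>k\<in>{1..<p}. 0 \<le> h k) \<and> (\<forall>k. k \<notin> {1..<p} \<longrightarrow> h k = 0) \<and> gap_total p h = 1"
  have "h k \<le> 1" if "k \<in> {1..<p}" for k
  proof -
    have "h k \<le> (\<Sum>k=1..<p. h k)" by (rule member_le_sum) (use that h in auto)
    then show ?thesis using h by (simp add: gap_total_def)
  qed
  then show "h \<in> gap_simplex p" using h unfolding gap_simplex_def by auto
qed

lemma gap_simplex_nonneg: "h \<in> gap_simplex p \<Longrightarrow> 0 \<le> h k"
  by (cases "k \<in> {1..<p}") (auto simp: gap_simplex_iff)

lemma compact_gap_simplex: "compact (gap_simplex p)"
proof -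
  define T where "T k = (if k \<in> {1..<p} then {0..1::real} else {0})" for k
  have "compactin (product_topology (\<lambda>i. euclidean) UNIV) (Pi\<^sub>E UNIV T)"
    unfolding compactin_PiE T_def by (auto simp: compactin_euclidean_iff)
  then have "compact (Pi\<^sub>E UNIV T)"
    by (simp add: euclidean_product_topology compactin_euclidean_iff)
  moreover have "closed {h. gap_total p h = 1}"
    unfolding gap_total_def by (intro closed_Collect_eq continuous_intros) auto
  moreover have "gap_simplex p = Pi\<^sub>E UNIV T \<inter> {h. gap_total p h = 1}"
    unfolding gap_simplex_def T_def by (auto simp: PiE_def Pi_def)
  ultimately show ?thesis by (simp add: compact_Int_closed)
qed

lemma normalized_in_gap_simplex:
  assumes "\<And>k. k \<in> {1..<p} \<Longrightarrow> 0 \<le> h k" and "\<And>k. k \<notin> {1..<p} \<Longrightarrow> h k = 0"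
    and "gap_total p h > 0"
  shows "(\<lambda>k. (1 / gap_total p h) * h k) \<in> gap_simplex p"
  using assms by (simp add: gap_simplex_iff gap_total_def sum_divide_distrib[symmetric])

section \<open>Gap weights of configurations\<close>

lemma sum_triangle_swap:
  fixes f :: "nat \<Rightarrow> nat \<Rightarrow> real"
  shows "(\<Sum>i=1..p. \<Sum>j=1..<i. f i j) = (\<Sum>j=1..p. \<Sum>i=j+1..p. f i j)"
proof -
  have "(\<Sum>i=1..p. \<Sum>j=1..<i. f i j) = (\<Sum>i=1..p. \<Sum>j=1..p. if j < i then f i j else 0)"
  proof (rule sum.cong)
    fix i assume "i \<in> {1..p}"
    then have "{j\<in>{1..p}. j < i} = {1..<i}" by auto
    then show "(\<Sum>j=1..<i. f i j) = (\<Sum>j=1..p. if j < i then f i j else 0)"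
      by (simp add: sum.inter_filter[symmetric])
  qed simp
  also have "\<dots> = (\<Sum>j=1..p. \<Sum>i=1..p. if j < i then f i j else 0)"
    by (rule sum.swap)
  also have "\<dots> = (\<Sum>j=1..p. \<Sum>i=j+1..p. f i j)"
  proof (rule sum.cong)
    fix j assume "j \<in> {1..p}"
    then have "{i\<in>{1..p}. j < i} = {j+1..p}" by auto
    then show "(\<Sum>i=1..p. if j < i then f i j else 0) = (\<Sum>i=j+1..p. f i j)"
      by (simp add: sum.inter_filter[symmetric])
  qed simp
  finally show ?thesis .
qed

lemma sum_off_diagonal_symmetric:
  fixes f :: "nat \<Rightarrow> nat \<Rightarrow> real"
  assumes sym: "\<And>i j. f i j = f j i"
  shows "(\<Sum>i\<in>{1..p}. \<Sum>j\<in>{1..p}-{i}. f i j) = 2 * (\<Sum>i=1..p. \<Sum>j=i+1..p. f i j)"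
proof -
  have "(\<Sum>j\<in>{1..p}-{i}. f i j) = (\<Sum>j=1..<i. f i j) + (\<Sum>j=i+1..p. f i j)"
    if "i \<in> {1..p}" for i
  proof -
    have "{1..p}-{i} = {1..<i} \<union> {i+1..p}" using that by auto
    moreover have "{1..<i} \<inter> {i+1..p} = {}" by auto
    ultimately show ?thesis by (simp add: sum.union_disjoint)
  qed
  then have "(\<Sum>i\<in>{1..p}. \<Sum>j\<in>{1..p}-{i}. f i j)
      = (\<Sum>i=1..p. \<Sum>j=1..<i. f i j) + (\<Sum>i=1..p. \<Sum>j=i+1..p. f i j)"
    by (simp add: sum.distrib)
  also have "(\<Sum>i=1..p. \<Sum>j=1..<i. f i j) = (\<Sum>i=1..p. \<Sum>j=i+1..p. f i j)"
    unfolding sum_triangle_swap using sym by simp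
  finally show ?thesis by simp
qed

lemma Rp_less_Suc: "X \<in> Rp p \<Longrightarrow> i \<in> {1..<p} \<Longrightarrow> X i < X (Suc i)"
  by (simp add: Rp_def)

lemma Rp_less:
  assumes X: "X \<in> Rp p" and "1 \<le> i" "i < j" "j \<le> p"
  shows "X i < X j"
proof -
  have "1 \<le> i \<longrightarrow> j \<le> p \<longrightarrow> X i < X j"
    using \<open>i < j\<close>
  proof (induction rule: less_Suc_induct)
    case (1 i)
    then show ?case using Rp_less_Suc[OF X, of i] by simp
  next
    case (2 i j k)
    then show ?case by auto
  qed
  then show ?thesis using assms by simp
qed

lemma Rp_dilate: "t > 0 \<Longrightarrow> X \<in> Rp p \<Longrightarrow> (\<lambda>i. t * X i) \<in> Rp p"
  by (simp add: Rp_def sum_distrib_left[symmetric])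

definition gap_weight :: "real \<Rightarrow> nat \<Rightarrow> (nat \<Rightarrow> real) \<Rightarrow> nat \<Rightarrow> real" where
  "gap_weight m p X k = (if k \<in> {1..<p} then (X (k+1) - X k) powr (1-m) else 0)"

lemma gap_weight_pos: "X \<in> Rp p \<Longrightarrow> k \<in> {1..<p} \<Longrightarrow> 0 < gap_weight m p X k"
  using Rp_less_Suc[of X p k] by (simp add: gap_weight_def)

lemma gap_weight_outside: "k \<notin> {1..<p} \<Longrightarrow> gap_weight m p X k = 0"
  unfolding gap_weight_def by (rule if_not_P)

lemma adj_sum_eq_gap_total: "adj_sum m p X = gap_total p (gap_weight m p X)"
  unfolding adj_sum_def gap_total_def gap_weight_def by (intro sum.cong) auto

lemma gap_total_pos: "X \<in> Rp p \<Longrightarrow> p \<ge> 2 \<Longrightarrow> 0 < gap_total p (gap_weight m p X)"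
  unfolding gap_total_def by (intro sum_pos gap_weight_pos) auto

lemma pair_sum_eq_link_total:
  assumes m: "m > 1" and X: "X \<in> Rp p"
  shows "pair_sum m p X = 2 * link_total (1/(m-1)) p (gap_weight m p X)"
proof -
  let ?s = "1/(m-1)" and ?h = "gap_weight m p X"
  have "pair_sum m p X = 2 * (\<Sum>i=1..p. \<Sum>j=i+1..p. \<bar>X j - X i\<bar> powr (1-m))"
    unfolding pair_sum_def by (rule sum_off_diagonal_symmetric) (simp add: abs_minus_commute)
  also have "(\<Sum>i=1..p. \<Sum>j=i+1..p. \<bar>X j - X i\<bar> powr (1-m)) = link_total ?s p ?h"
    unfolding link_total_def
  proof (intro sum.cong refl)
    fix i j assume i: "i \<in> {1..p}" and j: "j \<in> {i+1..p}"
    have gap: "?h t = (X (t+1) - X t) powr (1-m)" "X t < X (t+1)" if "t \<in> {i..<j}" for t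
      using that i j Rp_less_Suc[OF X, of t] by (auto simp: gap_weight_def)
    have "positive_on ?h i j"
      unfolding positive_on_def using i j by (auto intro!: gap_weight_pos[OF X])
    moreover have "(\<Sum>t=i..<j. ?h t powr (-?s)) = (\<Sum>t=i..<j. X (Suc t) - X t)"
    proof (rule sum.cong)
      fix t assume t: "t \<in> {i..<j}"
      have "(1-m) * (-?s) = 1" using m by (simp add: field_simps)
      then show "?h t powr (-?s) = X (Suc t) - X t"
        using gap[OF t] by (simp add: powr_powr)
    qed simp
    moreover have "(\<Sum>t=i..<j. X (Suc t) - X t) = X j - X i"
      using j by (intro sum_Suc_diff') auto
    moreover have "X i < X j" using Rp_less[OF X, of i j] i j by simp
    ultimately show "\<bar>X j - X i\<bar> powr (1-m) = link_weight ?s ?h i j"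
      using m by (simp add: link_weight_def divide_simps)
  qed
  finally show ?thesis .
qed

lemma ratio_eq_link_total:
  "m > 1 \<Longrightarrow> X \<in> Rp p \<Longrightarrow>
    ratio m p X = 2 * link_total (1/(m-1)) p (gap_weight m p X) / gap_total p (gap_weight m p X)"
  unfolding ratio_def by (simp add: pair_sum_eq_link_total adj_sum_eq_gap_total)

section \<open>Bounds for the link total\<close>

text \<open>The pairs linked across gap k starting from its left end k, resp. ending at its right
  end k+1; charging each linked pair to its first and last gap (link_weight_le) bounds
  link_total by them.\<close>
definition reach_right :: "(nat \<Rightarrow> real) \<Rightarrow> nat \<Rightarrow> nat \<Rightarrow> nat set" where
  "reach_right h p k = {j\<in>{k+1..p}. positive_on h k j}"

definition reach_left :: "(nat \<Rightarrow> real) \<Rightarrow> nat \<Rightarrow> nat set" where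
  "reach_left h k = {i\<in>{1..k}. positive_on h i (k+1)}"

lemma sum_pairs_first_gap:
  assumes "p \<ge> 1"
  shows "(\<Sum>i=1..p. \<Sum>j=i+1..p. if positive_on h i j then h i else 0)
    = (\<Sum>k=1..<p. h k * card (reach_right h p k))"
proof -
  have "(\<Sum>j=i+1..p. if positive_on h i j then h i else 0) = h i * card (reach_right h p i)" for i
    by (simp add: reach_right_def sum.inter_filter[symmetric])
  moreover have "{1..p} = insert p {1..<p}" and "reach_right h p p = {}"
    using assms by (auto simp: reach_right_def)
  ultimately show ?thesis by simp
qed

lemma sum_pairs_last_gap:
  assumes "p \<ge> 1"
  shows "(\<Sum>i=1..p. \<Sum>j=i+1..p. if positive_on h i j then h (j-1) else 0)
    = (\<Sum>k=1..<p. h k * card (reach_left h k))"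
proof -
  have "(\<Sum>i=1..p. \<Sum>j=i+1..p. if positive_on h i j then h (j-1) else 0)
      = (\<Sum>j=1..p. \<Sum>i=1..<j. if positive_on h i j then h (j-1) else 0)"
    using sum_triangle_swap[of "\<lambda>j i. if positive_on h i j then h (j-1) else 0" p] by simp
  also have "\<dots> = (\<Sum>j=1..p. h (j-1) * card {i\<in>{1..<j}. positive_on h i j})"
    by (intro sum.cong refl) (simp add: sum.inter_filter[symmetric])
  also have "\<dots> = (\<Sum>j=Suc 1..Suc (p-1). h (j-1) * card {i\<in>{1..<j}. positive_on h i j})"
    using assms by (intro sum.mono_neutral_right) auto
  also have "\<dots> = (\<Sum>k=1..p-1. h k * card {i\<in>{1..<Suc k}. positive_on h i (Suc k)})"
    by (subst sum.shift_bounds_cl_Suc_ivl) simp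
  also have "\<dots> = (\<Sum>k=1..<p. h k * card (reach_left h k))"
    using assms by (intro sum.cong) (auto simp: reach_left_def atLeastLessThanSuc_atLeastAtMost)
  finally show ?thesis .
qed

lemma link_total_le_reach_sum:
  assumes s: "s > 0" and nonneg: "\<And>k. k \<in> {1..<p} \<Longrightarrow> 0 \<le> h k" and p: "p \<ge> 1"
  shows "2 * link_total s p h
    \<le> (\<Sum>k=1..<p. h k * (card (reach_right h p k) + card (reach_left h k)))"
proof -
  have "2 * link_weight s h i j
      \<le> (if positive_on h i j then h i else 0) + (if positive_on h i j then h (j-1) else 0)"
    if "i \<in> {1..p}" "j \<in> {i+1..p}" for i j
  proof (cases "positive_on h i j")
    case True
    have "i \<in> {1..<p}" "j - 1 \<in> {1..<p}" using that by auto
    then have "link_weight s h i j \<le> h i" and "link_weight s h i j \<le> h (j-1)"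
      using that by (auto intro!: link_weight_le s nonneg)
    then show ?thesis using True by simp
  qed (simp add: link_weight_def)
  then have "2 * link_total s p h
      \<le> (\<Sum>i=1..p. \<Sum>j=i+1..p. (if positive_on h i j then h i else 0)
                              + (if positive_on h i j then h (j-1) else 0))"
    unfolding link_total_def sum_distrib_left by (intro sum_mono) auto
  also have "\<dots> = (\<Sum>k=1..<p. h k * (card (reach_right h p k) + card (reach_left h k)))"
    by (simp only: sum.distrib distrib_left of_nat_add sum_pairs_first_gap[OF p]
        sum_pairs_last_gap[OF p])
  finally show ?thesis .
qed

lemma link_total_le_gap_total:
  assumes s: "s > 0" and nonneg: "\<And>k. k \<in> {1..<p} \<Longrightarrow> 0 \<le> h k" and p: "p \<ge> 1"
  shows "2 * link_total s p h \<le> p * gap_total p h"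
proof -
  have card_bound: "card (reach_right h p k) + card (reach_left h k) \<le> p"
    if "k \<in> {1..<p}" for k
  proof -
    have "card (reach_right h p k) \<le> card {k+1..p}"
      by (rule card_mono) (auto simp: reach_right_def)
    moreover have "card (reach_left h k) \<le> card {1..k}"
      by (rule card_mono) (auto simp: reach_left_def)
    ultimately show ?thesis using that by (simp, linarith)
  qed
  have term_bound: "h k * (card (reach_right h p k) + card (reach_left h k)) \<le> h k * p"
    if "k \<in> {1..<p}" for k
    using card_bound[OF that] nonneg[OF that] by (intro mult_left_mono) simp_all
  have "2 * link_total s p h
      \<le> (\<Sum>k=1..<p. h k * (card (reach_right h p k) + card (reach_left h k)))"
    by (rule link_total_le_reach_sum[OF s nonneg p])
  also have "\<dots> \<le> (\<Sum>k=1..<p. h k * p)"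
    by (rule sum_mono) (rule term_bound)
  also have "\<dots> = p * gap_total p h"
    by (simp add: gap_total_def sum_distrib_left mult.commute)
  finally show ?thesis .
qed

section \<open>A maximiser has no zero weight\<close>

text \<open>When h k = 0 the link between the points k and k+1 is cut; this counts the pairs of
  points, one linked to k from the left and one linked to k+1 from the right, that get
  linked once h k becomes positive.\<close>
definition merge_count :: "(nat \<Rightarrow> real) \<Rightarrow> nat \<Rightarrow> nat \<Rightarrow> nat" where
  "merge_count h p k =
     card {i\<in>{1..k}. positive_on h i k} * card {j\<in>{k+1..p}. positive_on h (k+1) j}"

lemma merge_count_ge_left_block:
  assumes "positive_on h a b" "1 \<le> a" "a \<le> b" "b < p"
  shows "b + 1 - a \<le> merge_count h p b"
proof -
  have "{a..b} \<subseteq> {i\<in>{1..b}. positive_on h i b}"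
    using assms by (auto elim: positive_on_subset)
  then have left: "b + 1 - a \<le> card {i\<in>{1..b}. positive_on h i b}"
    using card_mono[of "{i\<in>{1..b}. positive_on h i b}" "{a..b}"] by simp
  have "b + 1 \<in> {j\<in>{b+1..p}. positive_on h (b+1) j}"
    using assms by (simp add: positive_on_def)
  then have right: "1 \<le> card {j\<in>{b+1..p}. positive_on h (b+1) j}"
    using card_mono[of _ "{b+1}"] by simp
  show ?thesis
    using mult_le_mono[OF left right] by (simp add: merge_count_def)
qed

lemma merge_count_ge_right_block:
  assumes "positive_on h (k+1) b" "1 \<le> k" "k < b" "b \<le> p"
  shows "b - k \<le> merge_count h p k"
proof -
  have "{k+1..b} \<subseteq> {j\<in>{k+1..p}. positive_on h (k+1) j}"
    using assms by (auto elim: positive_on_subset)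
  then have right: "b - k \<le> card {j\<in>{k+1..p}. positive_on h (k+1) j}"
    using card_mono[of "{j\<in>{k+1..p}. positive_on h (k+1) j}" "{k+1..b}"] by simp
  have "k \<in> {i\<in>{1..k}. positive_on h i k}"
    using assms by (simp add: positive_on_def)
  then have left: "1 \<le> card {i\<in>{1..k}. positive_on h i k}"
    using card_mono[of _ "{k}"] by simp
  show ?thesis
    using mult_le_mono[OF left right] by (simp add: merge_count_def)
qed

lemma reach_le_merge_count:
  assumes nonneg: "\<And>k. k \<in> {1..<p} \<Longrightarrow> 0 \<le> h k"
    and k: "k \<in> {1..<p}" "0 < h k" and z: "z \<in> {1..<p}" "h z = 0"
  shows "\<exists>k'\<in>{1..<p}. h k' = 0 \<and>
    card (reach_right h p k) + card (reach_left h k) \<le> merge_count h p k'"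
proof -
  have fin: "finite (reach_left h k)" "finite (reach_right h p k)"
    by (simp_all add: reach_left_def reach_right_def)
  have "k \<in> reach_left h k" "k + 1 \<in> reach_right h p k"
    using k by (auto simp: reach_left_def reach_right_def)
  then have ne: "reach_left h k \<noteq> {}" "reach_right h p k \<noteq> {}" by auto
  define a where "a = Min (reach_left h k)"
  define b where "b = Max (reach_right h p k)"
  have "a \<in> reach_left h k" "b \<in> reach_right h p k"
    unfolding a_def b_def using fin ne by (simp_all add: Min_in Max_in)
  then have a: "1 \<le> a" "a \<le> k" "positive_on h a (k+1)"
    and b: "k < b" "b \<le> p" "positive_on h k b"
    by (auto simp: reach_left_def reach_right_def)
  have ab: "positive_on h a b"
    using positive_on_trans[OF a(3) positive_on_subset[OF b(3), of "k+1" b]] by simp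
  have "reach_left h k \<subseteq> {a..k}" "reach_right h p k \<subseteq> {k+1..b}"
    unfolding a_def b_def using fin by (auto simp: reach_left_def reach_right_def)
  then have "card (reach_left h k) \<le> k + 1 - a" "card (reach_right h p k) \<le> b - k"
    using card_mono[of "{a..k}"] card_mono[of "{k+1..b}"] by fastforce+
  then have size: "card (reach_right h p k) + card (reach_left h k) \<le> b + 1 - a"
    using a b by linarith
  show ?thesis
  proof (cases "b < p")
    case True
    have "h b = 0"
    proof (rule ccontr)
      assume "h b \<noteq> 0"
      then have "positive_on h k (b+1)"
        using positive_on_trans[OF b(3), of "Suc b"] nonneg[of b] True b by simp
      then have "b + 1 \<in> reach_right h p k"
        using True b by (simp add: reach_right_def)
      then show False using Max_ge[OF fin(2)] b_def by fastforce
    qed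
    moreover have "b + 1 - a \<le> merge_count h p b"
      using merge_count_ge_left_block[OF ab a(1) _ True] a b by simp
    ultimately show ?thesis using size True a b by (intro bexI[of _ b]) auto
  next
    case False
    then have "b = p" using b by simp
    have "z < a"
    proof (rule ccontr)
      assume "\<not> z < a"
      then have "z \<in> {a..<b}" using z \<open>b = p\<close> by simp
      then have "0 < h z" using ab by (simp add: positive_on_def)
      then show False using z by simp
    qed
    then have a2: "2 \<le> a" using z by simp
    have "h (a - 1) = 0"
    proof (rule ccontr)
      assume "h (a - 1) \<noteq> 0"
      moreover have "a - 1 \<in> {1..<p}" using a a2 k by auto
      ultimately have "0 < h (a - 1)" using nonneg[of "a - 1"] by simp
      then have "positive_on h (a - 1) a" using positive_on_Suc[of h "a - 1"] a2 by simp
      then have "positive_on h (a - 1) (k+1)" using positive_on_trans a(3) by blast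
      then have "a - 1 \<in> reach_left h k"
        using a a2 by (auto simp: reach_left_def)
      then show False using Min_le[OF fin(1)] a_def a2 by fastforce
    qed
    moreover have "b + 1 - a \<le> merge_count h p (a - 1)"
      using merge_count_ge_right_block[of h "a - 1" b p] ab a a2 b by simp
    ultimately show ?thesis using size a a2 b k by (intro bexI[of _ "a - 1"]) auto
  qed
qed

lemma link_total_le_merge_count:
  assumes s: "s > 0" and h: "h \<in> gap_simplex p" and z: "z \<in> {1..<p}" "h z = 0"
  shows "\<exists>k\<in>{1..<p}. h k = 0 \<and> 2 * link_total s p h \<le> merge_count h p k"
proof -
  define Z where "Z = {k\<in>{1..<p}. h k = 0}"
  have Z: "finite Z" "z \<in> Z" using z by (auto simp: Z_def)
  obtain k where k: "k \<in> Z" and k_max: "\<And>k'. k' \<in> Z \<Longrightarrow> merge_count h p k' \<le> merge_count h p k"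
    using Max_in[of "merge_count h p ` Z"] Max_ge[of "merge_count h p ` Z"] Z by fastforce
  have nonneg: "\<And>k. k \<in> {1..<p} \<Longrightarrow> 0 \<le> h k"
    using h gap_simplex_nonneg by blast
  have "h k' * (card (reach_right h p k') + card (reach_left h k')) \<le> h k' * merge_count h p k"
    if k': "k' \<in> {1..<p}" for k'
  proof (cases "h k' = 0")
    case False
    then have "0 < h k'" using nonneg[OF k'] by simp
    then obtain k'' where "k'' \<in> Z"
        "card (reach_right h p k') + card (reach_left h k') \<le> merge_count h p k''"
      using reach_le_merge_count[of p h k' z, OF nonneg k' \<open>0 < h k'\<close> z] by (auto simp: Z_def)
    then have "card (reach_right h p k') + card (reach_left h k') \<le> merge_count h p k"
      using k_max by (meson order_trans)
    then show ?thesis using nonneg[OF k'] by (intro mult_left_mono) simp_all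
  qed simp
  then have "(\<Sum>k'=1..<p. h k' * (card (reach_right h p k') + card (reach_left h k')))
      \<le> (\<Sum>k'=1..<p. h k' * merge_count h p k)"
    by (intro sum_mono)
  also have "\<dots> = merge_count h p k"
    using h by (simp add: gap_simplex_iff gap_total_def sum_distrib_right[symmetric])
  finally show ?thesis
    using link_total_le_reach_sum[of s p h, OF s nonneg] k z by (auto simp: Z_def)
qed

lemma gap_total_fun_upd:
  assumes "k \<in> {1..<p}"
  shows "gap_total p (h(k := x)) = gap_total p h - h k + x"
proof -
  have "gap_total p (h(k := x)) = x + (\<Sum>t\<in>{1..<p}-{k}. (h(k := x)) t)"
    unfolding gap_total_def using assms by (subst sum.remove[of _ k]) auto
  moreover have "gap_total p h = h k + (\<Sum>t\<in>{1..<p}-{k}. h t)"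
    unfolding gap_total_def using assms by (subst sum.remove[of _ k]) auto
  moreover have "(\<Sum>t\<in>{1..<p}-{k}. (h(k := x)) t) = (\<Sum>t\<in>{1..<p}-{k}. h t)"
    by (intro sum.cong) auto
  ultimately show ?thesis by simp
qed

lemma link_weight_fill_zero:
  assumes s: "s > 0" and \<theta>: "0 < \<theta>" "\<theta> < 1" and k: "i \<le> k" "k < j"
    and pos: "positive_on h i k" "positive_on h (k+1) j"
  shows "\<forall>\<^sub>F \<epsilon> in at_right 0. \<theta> * \<epsilon> \<le> link_weight s (h(k := \<epsilon>)) i j"
proof -
  define A where "A = (\<Sum>t\<in>{i..<j}-{k}. h t powr (-s))"
  define c where "c = \<theta> powr (-s)"
  have "\<theta> powr s < 1 powr s" using \<theta> s by (intro powr_less_mono2) auto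
  then have c: "1 < c" using \<theta> by (simp add: c_def powr_minus field_simps)
  have "filterlim (\<lambda>\<epsilon>. \<epsilon> powr (-s)) at_top (at_right 0)"
    using s by real_asymp
  then have "\<forall>\<^sub>F \<epsilon> in at_right 0. A / (c - 1) \<le> \<epsilon> powr (-s)"
    by (simp add: filterlim_at_top)
  moreover have "\<forall>\<^sub>F \<epsilon> in at_right 0. (0::real) < \<epsilon>"
    by (rule eventually_at_right_less)
  ultimately show ?thesis
  proof eventually_elim
    case (elim \<epsilon>)
    let ?g = "h(k := \<epsilon>)"
    have "positive_on ?g i j"
      unfolding positive_on_def
    proof
      fix t assume "t \<in> {i..<j}"
      then show "0 < ?g t"
        using pos elim(2) by (cases t k rule: linorder_cases) (auto simp: positive_on_def)
    qed
    have sum_eq: "(\<Sum>t=i..<j. ?g t powr (-s)) = \<epsilon> powr (-s) + A"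
      using k by (simp add: A_def sum.remove[of "{i..<j}" k])
    have "0 \<le> A" by (simp add: A_def sum_nonneg)
    then have sum_pos: "0 < (\<Sum>t=i..<j. ?g t powr (-s))"
      using sum_eq elim(2) by (simp add: add_pos_nonneg)
    have "(\<Sum>t=i..<j. ?g t powr (-s)) \<le> c * \<epsilon> powr (-s)"
      using sum_eq elim c by (simp add: field_simps)
    also have "\<dots> = (\<theta> * \<epsilon>) powr (-s)"
      using \<theta> elim(2) by (simp add: c_def powr_mult)
    finally have "((\<theta> * \<epsilon>) powr (-s)) powr (-1/s) \<le> (\<Sum>t=i..<j. ?g t powr (-s)) powr (-1/s)"
      using sum_pos s by (intro powr_mono2') auto
    then show ?case
      using \<open>positive_on ?g i j\<close> \<theta> elim(2) s by (simp add: link_weight_def powr_powr)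
  qed
qed

lemma link_total_fill_zero_ge:
  assumes k: "k \<in> {1..<p}" "h k = 0"
    and gain: "\<And>i j. i \<in> {1..k} \<Longrightarrow> positive_on h i k \<Longrightarrow> j \<in> {k+1..p} \<Longrightarrow>
      positive_on h (k+1) j \<Longrightarrow> w \<le> link_weight s (h(k := x)) i j"
  shows "link_total s p h + w * real (merge_count h p k) \<le> link_total s p (h(k := x))"
proof -
  define L where "L = {i\<in>{1..k}. positive_on h i k}"
  define R where "R = {j\<in>{k+1..p}. positive_on h (k+1) j}"
  define P where "P = (SIGMA i:{1..p}. {i+1..p})"
  define d where "d ij = link_weight s (h(k := x)) (fst ij) (snd ij) - link_weight s h (fst ij) (snd ij)"
    for ij
  have LR: "L \<times> R \<subseteq> P" and "finite P"
    using k by (auto simp: L_def R_def P_def)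
  have total: "link_total s p g = (\<Sum>ij\<in>P. link_weight s g (fst ij) (snd ij))" for g
    unfolding link_total_def P_def by (simp add: sum.Sigma split_def)
  have cut: "link_weight s h i j = 0" if "k \<in> {i..<j}" for i j
  proof -
    have "\<not> positive_on h i j" using that k(2) by (metis less_irrefl positive_on_def)
    then show ?thesis by (simp add: link_weight_def)
  qed
  have d_nonneg: "0 \<le> d ij" for ij
  proof (cases "k \<in> {fst ij..<snd ij}")
    case True
    then show ?thesis using cut by (simp add: d_def link_weight_nonneg)
  next
    case False
    then have "link_weight s (h(k := x)) (fst ij) (snd ij) = link_weight s h (fst ij) (snd ij)"
      by (intro link_weight_cong) auto
    then show ?thesis by (simp add: d_def)
  qed
  have "w * real (merge_count h p k) = (\<Sum>ij\<in>L \<times> R. w)"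
    by (simp add: merge_count_def L_def R_def card_cartesian_product)
  also have "\<dots> \<le> (\<Sum>ij\<in>L \<times> R. d ij)"
    by (intro sum_mono) (auto simp: L_def R_def d_def cut gain)
  also have "\<dots> \<le> (\<Sum>ij\<in>P. d ij)"
    using LR \<open>finite P\<close> d_nonneg by (intro sum_mono2) auto
  also have "\<dots> = link_total s p (h(k := x)) - link_total s p h"
    by (simp add: total d_def sum_subtractf)
  finally show ?thesis by simp
qed

lemma link_total_fill_zero:
  assumes s: "s > 0" and \<theta>: "0 < \<theta>" "\<theta> < 1" and k: "k \<in> {1..<p}" "h k = 0"
  shows "\<forall>\<^sub>F \<epsilon> in at_right 0.
    link_total s p h + \<theta> * \<epsilon> * real (merge_count h p k) \<le> link_total s p (h(k := \<epsilon>))"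
proof -
  define L where "L = {i\<in>{1..k}. positive_on h i k}"
  define R where "R = {j\<in>{k+1..p}. positive_on h (k+1) j}"
  have "\<forall>\<^sub>F \<epsilon> in at_right 0. \<forall>i\<in>L. \<forall>j\<in>R. \<theta> * \<epsilon> \<le> link_weight s (h(k := \<epsilon>)) i j"
    by (intro eventually_ball_finite ballI link_weight_fill_zero s \<theta>) (auto simp: L_def R_def)
  then show ?thesis
    by (rule eventually_mono) (intro link_total_fill_zero_ge k, auto simp: L_def R_def)
qed

lemma link_total_not_max_at_zero:
  assumes s: "s > 0" and h: "h \<in> gap_simplex p" and z: "z \<in> {1..<p}" "h z = 0"
  shows "\<exists>h'\<in>gap_simplex p. link_total s p h < link_total s p h'"
proof -
  obtain k where k: "k \<in> {1..<p}" "h k = 0" and G_le: "2 * link_total s p h \<le> merge_count h p k"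
    using link_total_le_merge_count[OF s h z] by blast
  define G where "G = link_total s p h"
  define N where "N = real (merge_count h p k)"
  have "1 \<le> merge_count h p k"
    using merge_count_ge_left_block[of h k k p] k by (simp add: positive_on_def)
  then have N: "1 \<le> N" by (simp add: N_def)
  have G: "0 \<le> G" "2 * G \<le> N"
    using G_le by (simp_all add: G_def N_def link_total_nonneg)
  text \<open>Any \<theta> with G < \<theta> * N < N works; take the midpoint.\<close>
  define \<theta> where "\<theta> = (G + N) / (2 * N)"
  have \<theta>: "0 < \<theta>" "\<theta> < 1" "G < \<theta> * N"
    using N G by (simp_all add: \<theta>_def field_simps)
  have "\<forall>\<^sub>F \<epsilon> in at_right 0. 0 < \<epsilon> \<and> G + \<theta> * \<epsilon> * N \<le> link_total s p (h(k := \<epsilon>))"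
    using eventually_at_right_less link_total_fill_zero[where h=h, OF s \<theta>(1,2) k]
    unfolding G_def N_def by (rule eventually_conj)
  then obtain \<epsilon> where \<epsilon>: "0 < \<epsilon>" "G + \<theta> * \<epsilon> * N \<le> link_total s p (h(k := \<epsilon>))"
    using eventually_happens'[OF trivial_limit_at_right_real] by blast
  let ?g = "h(k := \<epsilon>)"
  have total: "gap_total p ?g = 1 + \<epsilon>"
    using h k by (simp add: gap_simplex_iff gap_total_fun_upd)
  define h' where "h' = (\<lambda>t. (1 / gap_total p ?g) * ?g t)"
  have h': "h' \<in> gap_simplex p"
    unfolding h'_def using h k \<epsilon>(1) total
    by (intro normalized_in_gap_simplex) (auto simp: gap_simplex_iff)
  have "G * \<epsilon> < \<theta> * \<epsilon> * N"
    using mult_strict_right_mono[OF \<theta>(3) \<epsilon>(1)] by (simp add: algebra_simps)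
  then have "G * (1 + \<epsilon>) < link_total s p ?g"
    using \<epsilon>(2) by (simp add: algebra_simps)
  moreover have "link_total s p h' = (1 / (1 + \<epsilon>)) * link_total s p ?g"
    unfolding h'_def total using \<epsilon>(1) s by (intro link_total_scale) auto
  ultimately have "G * (1 + \<epsilon>) < link_total s p h' * (1 + \<epsilon>)"
    using \<epsilon>(1) by (simp add: field_simps)
  then have "G < link_total s p h'"
    using \<epsilon>(1) by (simp add: mult_less_cancel_right_pos)
  with h' show ?thesis unfolding G_def by blast
qed

lemma link_total_max_interior:
  assumes s: "s > 0" and p: "p \<ge> 2"
  shows "\<exists>h\<in>gap_simplex p. (\<forall>k\<in>{1..<p}. 0 < h k)
    \<and> (\<forall>h'\<in>gap_simplex p. link_total s p h' \<le> link_total s p h)"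
proof -
  have "(\<lambda>k. if k \<in> {1..<p} then 1 / real (p - 1) else 0) \<in> gap_simplex p"
    using p by (simp add: gap_simplex_iff gap_total_def)
  then have "gap_simplex p \<noteq> {}" by blast
  moreover have "continuous_on (gap_simplex p) (link_total s p)"
    by (rule continuous_on_subset[OF link_total_continuous_on[OF s]])
      (auto simp: gap_simplex_nonneg)
  ultimately obtain h where h: "h \<in> gap_simplex p"
    and h_max: "\<And>h'. h' \<in> gap_simplex p \<Longrightarrow> link_total s p h' \<le> link_total s p h"
    using continuous_attains_sup[OF compact_gap_simplex] by blast
  have "0 < h k" if k: "k \<in> {1..<p}" for k
  proof (rule ccontr)
    assume "\<not> 0 < h k"
    then have "h k = 0" using gap_simplex_nonneg[OF h, of k] by simp
    then show False
      using link_total_not_max_at_zero[OF s h k] h_max by fastforce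
  qed
  then show ?thesis using h h_max by blast
qed

section \<open>The maximal ratio\<close>

lemma ex_Rp_with_gap_weight:
  assumes m: "m > 1" and pos: "\<And>k. k \<in> {1..<p} \<Longrightarrow> 0 < h k"
    and zero: "\<And>k. k \<notin> {1..<p} \<Longrightarrow> h k = 0"
  shows "\<exists>X\<in>Rp p. gap_weight m p X = h"
proof -
  define P where "P i = (\<Sum>k=1..<i. h k powr (-1/(m-1)))" for i
  define X where "X i = P i - (\<Sum>i=1..p. P i) / p" for i
  have step: "X (k+1) - X k = h k powr (-1/(m-1))" if "1 \<le> k" for k
    using that by (simp add: X_def P_def)
  have "X i < X (i+1)" if "i \<in> {1..<p}" for i
  proof -
    have "0 < h i powr (-1/(m-1))" using pos[OF that] by simp
    moreover have "X (i+1) - X i = h i powr (-1/(m-1))" using that by (intro step) simp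
    ultimately show ?thesis by linarith
  qed
  moreover have "(\<Sum>i=1..p. X i) = 0"
    by (simp add: X_def sum_subtractf)
  ultimately have "X \<in> Rp p" by (simp add: Rp_def)
  moreover have "gap_weight m p X k = h k" for k
  proof (cases "k \<in> {1..<p}")
    case True
    have "(-1/(m-1)) * (1-m) = 1" using m by (simp add: field_simps)
    then show ?thesis
      using True step[of k] pos[OF True] by (simp add: gap_weight_def powr_powr)
  qed (simp add: gap_weight_outside zero)
  ultimately show ?thesis by blast
qed

lemma ratio_attains_max:
  assumes m: "m > 1" and p: "p \<ge> 2"
  shows "\<exists>X\<in>Rp p. \<forall>Y\<in>Rp p. ratio m p Y \<le> ratio m p X"
proof -
  define s where "s = 1 / (m - 1)"
  have s: "s > 0" using m by (simp add: s_def)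
  obtain h where h: "h \<in> gap_simplex p" "\<forall>k\<in>{1..<p}. 0 < h k"
    and h_max: "\<And>h'. h' \<in> gap_simplex p \<Longrightarrow> link_total s p h' \<le> link_total s p h"
    using link_total_max_interior[OF s p] by blast
  obtain X where X: "X \<in> Rp p" "gap_weight m p X = h"
    using ex_Rp_with_gap_weight[OF m, of p h] h by (auto simp: gap_simplex_iff)
  have "ratio m p Y \<le> ratio m p X" if Y: "Y \<in> Rp p" for Y
  proof -
    let ?g = "gap_weight m p Y"
    have total: "0 < gap_total p ?g" using gap_total_pos[OF Y p] .
    have "(\<lambda>k. (1 / gap_total p ?g) * ?g k) \<in> gap_simplex p"
      using total gap_weight_pos[OF Y] by (intro normalized_in_gap_simplex)
        (auto simp: gap_weight_outside less_imp_le)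
    then have "link_total s p (\<lambda>k. (1 / gap_total p ?g) * ?g k) \<le> link_total s p h"
      by (rule h_max)
    moreover have "link_total s p (\<lambda>k. (1 / gap_total p ?g) * ?g k)
        = (1 / gap_total p ?g) * link_total s p ?g"
      using total s by (intro link_total_scale) simp_all
    ultimately have "(1 / gap_total p ?g) * link_total s p ?g \<le> link_total s p h"
      by simp
    then show ?thesis
      using ratio_eq_link_total[OF m Y] ratio_eq_link_total[OF m X(1)] X(2) h(1)
      by (simp add: s_def gap_simplex_iff)
  qed
  then show ?thesis using X by blast
qed

lemma ratio_le_card:
  assumes m: "m > 1" and p: "p \<ge> 2" and X: "X \<in> Rp p"
  shows "ratio m p X \<le> p"
proof -
  let ?g = "gap_weight m p X"
  have "2 * link_total (1/(m-1)) p ?g \<le> p * gap_total p ?g"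
    using m p gap_weight_pos[OF X] gap_weight_outside
    by (intro link_total_le_gap_total) (auto intro: less_imp_le)
  moreover have total: "0 < gap_total p ?g" using gap_total_pos[OF X p] .
  ultimately have "ratio m p X * gap_total p ?g \<le> p * gap_total p ?g"
    using ratio_eq_link_total[OF m X] by simp
  then show ?thesis using total by (rule mult_right_le_imp_le)
qed

lemma pair_sum_pos:
  assumes X: "X \<in> Rp p" and p: "p \<ge> 2"
  shows "0 < pair_sum m p X"
  unfolding pair_sum_def
proof (intro sum_pos)
  fix i j assume i: "i \<in> {1..p}" and j: "j \<in> {1..p} - {i}"
  then have "X j \<noteq> X i"
    using Rp_less[OF X, of i j] Rp_less[OF X, of j i] by (cases "i < j") auto
  then show "0 < \<bar>X j - X i\<bar> powr (1 - m)" by simp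
next
  fix i assume "i \<in> {1..p}"
  then have "(if i = 1 then 2 else 1) \<in> {1..p} - {i}" using p by auto
  then show "{1..p} - {i} \<noteq> {}" by blast
qed (use p in auto)

lemma ratio_pos: "p \<ge> 2 \<Longrightarrow> X \<in> Rp p \<Longrightarrow> 0 < ratio m p X"
  unfolding ratio_def
  using pair_sum_pos gap_total_pos adj_sum_eq_gap_total by (metis divide_pos_pos)

lemma Fp_nonneg:
  assumes p: "p \<ge> 2" and m: "m > 1" and X: "X \<in> Rp p" and \<alpha>: "\<alpha> \<ge> 0"
    and \<chi>: "\<chi> * ratio m p X \<le> 1"
  shows "0 \<le> Fp m \<chi> \<alpha> p X"
proof -
  have adj: "0 < adj_sum m p X"
    using gap_total_pos[OF X p] by (simp add: adj_sum_eq_gap_total)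
  then have "\<chi> * pair_sum m p X = (\<chi> * ratio m p X) * adj_sum m p X"
    by (simp add: ratio_def)
  also have "\<dots> \<le> adj_sum m p X"
    using mult_right_mono[OF \<chi>] adj by simp
  finally have "0 \<le> (adj_sum m p X - \<chi> * pair_sum m p X) / (m - 1)"
    using m by simp
  moreover have "0 \<le> \<alpha> * (\<Sum>i=1..p. (X i)^2) / 2"
    using \<alpha> by (simp add: sum_nonneg)
  ultimately show ?thesis by (simp add: Fp_def diff_divide_distrib)
qed

lemma adj_sum_dilate:
  assumes t: "t > 0" and X: "X \<in> Rp p"
  shows "adj_sum m p (\<lambda>i. t * X i) = t powr (1-m) * adj_sum m p X"
  unfolding adj_sum_def sum_distrib_left
proof (rule sum.cong)
  fix i assume "i \<in> {1..<p}"
  then have "0 < X (i+1) - X i" using Rp_less_Suc[OF X] by simp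
  then show "(t * X (i+1) - t * X i) powr (1-m) = t powr (1-m) * (X (i+1) - X i) powr (1-m)"
    using t by (simp add: powr_mult right_diff_distrib[symmetric])
qed simp

lemma pair_sum_dilate:
  assumes t: "t > 0"
  shows "pair_sum m p (\<lambda>i. t * X i) = t powr (1-m) * pair_sum m p X"
  unfolding pair_sum_def sum_distrib_left
  using t by (intro sum.cong refl)
    (simp add: powr_mult abs_mult right_diff_distrib[symmetric])

lemma Fp_dilate:
  assumes t: "t > 0" and X: "X \<in> Rp p"
  shows "Fp m \<chi> \<alpha> p (\<lambda>i. t * X i)
    = t powr (1-m) * Fp m \<chi> 0 p X + t^2 * (\<alpha> * (\<Sum>i=1..p. (X i)^2) / 2)"
  unfolding Fp_def adj_sum_dilate[OF t X] pair_sum_dilate[OF t]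
  by (simp add: power_mult_distrib sum_distrib_left algebra_simps)

lemma Fp_unbounded_below:
  assumes p: "p \<ge> 2" and m: "m > 1" and X: "X \<in> Rp p" and \<chi>: "1 < \<chi> * ratio m p X"
  shows "\<not> bdd_below (Fp m \<chi> \<alpha> p ` Rp p)"
proof
  assume "bdd_below (Fp m \<chi> \<alpha> p ` Rp p)"
  then obtain B where B: "\<And>Y. Y \<in> Rp p \<Longrightarrow> B \<le> Fp m \<chi> \<alpha> p Y"
    by (auto simp: bdd_below_def)
  define c where "c = Fp m \<chi> 0 p X"
  define q where "q = \<alpha> * (\<Sum>i=1..p. (X i)^2) / 2"
  have adj: "0 < adj_sum m p X"
    using gap_total_pos[OF X p] by (simp add: adj_sum_eq_gap_total)
  then have "pair_sum m p X = ratio m p X * adj_sum m p X"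
    by (simp add: ratio_def)
  then have "c = (1 - \<chi> * ratio m p X) * adj_sum m p X / (m - 1)"
    by (simp add: c_def Fp_def diff_divide_distrib algebra_simps)
  then have "c < 0"
    using \<chi> adj m by (simp add: divide_neg_pos mult_neg_pos)
  then have "filterlim (\<lambda>t. t powr (1-m) * c + t^2 * q) at_bot (at_right 0)"
    using m by real_asymp
  then have "\<forall>\<^sub>F t in at_right 0. t powr (1-m) * c + t^2 * q < B"
    by (simp add: filterlim_at_bot_dense)
  moreover have "\<forall>\<^sub>F t in at_right 0. (0::real) < t"
    by (rule eventually_at_right_less)
  ultimately obtain t where "t powr (1-m) * c + t^2 * q < B" and "0 < t"
    using eventually_happens'[OF trivial_limit_at_right_real] eventually_conj by blast
  then show False
    using B[OF Rp_dilate[OF \<open>0 < t\<close> X]] Fp_dilate[OF \<open>0 < t\<close> X]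
    by (simp add: c_def q_def)
qed

theorem proposition2p3:
  fixes m \<chi> :: real and p :: nat
  assumes "m > 1" and "\<chi> > 0" and "p \<ge> 2"
  shows "(\<exists>X\<in>Rp p. \<forall>Y\<in>Rp p. ratio m p Y \<le> ratio m p X)
    \<and> 1 / Cp m p \<le> real p
    \<and> (\<forall>\<alpha>::real. \<alpha> \<ge> 0 \<longrightarrow> (bdd_below (Fp m \<chi> \<alpha> p ` Rp p) \<longleftrightarrow> \<chi> \<le> Cp m p))"
proof -
  obtain X where X: "X \<in> Rp p" and X_max: "\<And>Y. Y \<in> Rp p \<Longrightarrow> ratio m p Y \<le> ratio m p X"
    using ratio_attains_max[OF assms(1,3)] by blast
  define M where "M = ratio m p X"
  have "(SUP Y\<in>Rp p. ratio m p Y) = M"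
    unfolding M_def using X X_max by (intro cSup_eq_maximum) auto
  then have Cp: "Cp m p = 1 / M" by (simp add: Cp_def)
  have M: "0 < M" "M \<le> p"
    unfolding M_def using ratio_pos ratio_le_card assms X by auto
  have "bdd_below (Fp m \<chi> \<alpha> p ` Rp p) \<longleftrightarrow> \<chi> \<le> Cp m p" if "\<alpha> \<ge> 0" for \<alpha>
  proof
    assume "bdd_below (Fp m \<chi> \<alpha> p ` Rp p)"
    then have "\<not> 1 < \<chi> * M"
      using Fp_unbounded_below[OF assms(3,1) X] by (auto simp: M_def)
    then show "\<chi> \<le> Cp m p" using M by (simp add: Cp field_simps)
  next
    assume "\<chi> \<le> Cp m p"
    then have "\<chi> * ratio m p Y \<le> 1" if "Y \<in> Rp p" for Y
      using X_max[OF that] M \<open>\<chi> > 0\<close> Cp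
      by (simp add: field_simps M_def) (smt (verit) mult_left_mono)
    then show "bdd_below (Fp m \<chi> \<alpha> p ` Rp p)"
      using Fp_nonneg[OF assms(3,1) _ \<open>\<alpha> \<ge> 0\<close>] by (intro bdd_belowI[of _ 0]) auto
  qed
  moreover have "\<exists>X\<in>Rp p. \<forall>Y\<in>Rp p. ratio m p Y \<le> ratio m p X"
    using X X_max by blast
  ultimately show ?thesis using M by (simp add: Cp)
qed

end
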